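(* Let $X, B_1, \dots, B_n$ be $d\times d$ symmetric positive definite matrices and let $\phi(\alpha) := \delta_R^2\big(\sum_{i=1}^n \alpha_i B_i, X\big)$ for $\alpha \in \mathbb{R}^n$. Then $\phi$ is convex on the set $$\mathcal{A} := \Big\{\alpha \in \mathbb{R}^n \;\Big|\; \sum_{i=1}^n \alpha_i B_i \preceq X \text{ and } \alpha \ge 0\Big\}.$$
   Context: For symmetric positive definite $X, Y$, $\delta_R(X,Y) = \|\log(X^{-1/2} Y X^{-1/2})\|_F$ with $\log$ the principal matrix logarithm and $\|\cdot\|_F$ the Frobenius norm; $\phi(\alpha)$ is defined when $\sum_i \alpha_i B_i$ is positive definite. $\preceq$ denotes the Löwner order ($A \preceq B$ iff $B - A$ is positive semidefinite), and $\alpha \ge 0$ means entrywise nonnegativity. *)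

theory Defs
  imports "HOL-Analysis.Analysis"
begin

text \<open>Square real matrices are represented as real^'d^'d; the (Euclidean)
norm on this type is exactly the Frobenius norm.\<close>

definition sym_mat :: "real^'d^'d \<Rightarrow> bool" where
  "sym_mat A \<longleftrightarrow> transpose A = A"

definition pos_def :: "real^'d^'d \<Rightarrow> bool" where
  "pos_def A \<longleftrightarrow> sym_mat A \<and> (\<forall>x. x \<noteq> 0 \<longrightarrow> x \<bullet> (A *v x) > 0)"

definition pos_semidef :: "real^'d^'d \<Rightarrow> bool" where
  "pos_semidef A \<longleftrightarrow> sym_mat A \<and> (\<forall>x. x \<bullet> (A *v x) \<ge> 0)"

definition loewner_le :: "real^'d^'d \<Rightarrow> real^'d^'d \<Rightarrow> bool" where
  "loewner_le A B \<longleftrightarrow> pos_semidef (B - A)"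

fun mat_pow :: "real^'d^'d \<Rightarrow> nat \<Rightarrow> real^'d^'d" where
  "mat_pow A 0 = mat 1"
| "mat_pow A (Suc k) = A ** mat_pow A k"

definition mat_exp :: "real^'d^'d \<Rightarrow> real^'d^'d" where
  "mat_exp L = (\<Sum>k. (1 / fact k) *\<^sub>R mat_pow L k)"

definition mat_log :: "real^'d^'d \<Rightarrow> real^'d^'d" where
  "mat_log A = (THE L. sym_mat L \<and> mat_exp L = A)"

definition mat_sqrt :: "real^'d^'d \<Rightarrow> real^'d^'d" where
  "mat_sqrt A = (THE S. pos_def S \<and> S ** S = A)"

definition delta_R :: "real^'d^'d \<Rightarrow> real^'d^'d \<Rightarrow> real" where
  "delta_R X Y = norm (mat_log (matrix_inv (mat_sqrt X) ** Y ** matrix_inv (mat_sqrt X)))"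

end

theory Submission
  imports Defs
begin

text \<open>With \<open>C(A) = X^(-1/2) A X^(-1/2)\<close> and \<open>h t = (ln t)\<^sup>2\<close> one has
\<open>\<delta>\<^sub>R(A, X)\<^sup>2 = tr h(C(A))\<close>: the eigenvalues of \<open>A^(-1/2) X A^(-1/2) = T\<^sup>T T\<close>, where
\<open>T = X^(1/2) A^(-1/2)\<close>, are those of \<open>T T\<^sup>T = C(A)\<^sup>-\<^sup>1\<close>, and \<open>h(1/t) = h t\<close>.
For \<open>0 \<prec> A \<preceq> X\<close> the Rayleigh quotients of \<open>C(A)\<close> lie in \<open>(0,1]\<close>, where \<open>h\<close> is convex.
For \<open>A\<^sub>t = (1 - t) A\<^sub>0 + t A\<^sub>1\<close>, expand \<open>tr h(C(A\<^sub>t))\<close> in an eigenbasis \<open>u\<close> of \<open>C(A\<^sub>t)\<close>;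
since \<open>u \<bullet> C(A\<^sub>t) u\<close> is affine in \<open>t\<close>, convexity of \<open>h\<close> and Peierls' inequality
\<open>\<Sum>\<^sub>u h(u \<bullet> C u) \<le> tr h(C)\<close> give \<open>tr h(C(A\<^sub>t)) \<le> (1 - t) tr h(C(A\<^sub>0)) + t tr h(C(A\<^sub>1))\<close>.
Composing with the linear map \<open>\<alpha> \<mapsto> \<Sum>\<^sub>i \<alpha>\<^sub>i B\<^sub>i\<close> gives the theorem.\<close>

definition outer_prod :: "real^'d \<Rightarrow> real^'d^'d" where
  "outer_prod v = (\<chi> i j. v$i * v$j)"

definition orthonormal_basis :: "(real^'d) set \<Rightarrow> bool" where
  "orthonormal_basis E \<longleftrightarrow> pairwise orthogonal E \<and> (\<forall>e\<in>E. norm e = 1) \<and> span E = UNIV"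

definition spectral_mat :: "(real^'d) set \<Rightarrow> (real^'d \<Rightarrow> real) \<Rightarrow> real^'d^'d" where
  "spectral_mat E c = (\<Sum>e\<in>E. c e *\<^sub>R outer_prod e)"

definition eigenbasis :: "real^'d^'d \<Rightarrow> (real^'d) set \<Rightarrow> (real^'d \<Rightarrow> real) \<Rightarrow> bool" where
  "eigenbasis M E c \<longleftrightarrow> orthonormal_basis E \<and> (\<forall>e\<in>E. M *v e = c e *\<^sub>R e)"

section \<open>Orthonormal bases\<close>

lemma orthonormal_basis_finite: "orthonormal_basis E \<Longrightarrow> finite E"
  unfolding orthonormal_basis_def
  by (metis independent_imp_finite norm_zero pairwise_orthogonal_independent zero_neq_one)

lemma orthonormal_basis_inner:
  "orthonormal_basis E \<Longrightarrow> e \<in> E \<Longrightarrow> f \<in> E \<Longrightarrow> e \<bullet> f = (if e = f then 1 else 0)"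
  unfolding orthonormal_basis_def pairwise_def orthogonal_def
  by (metis norm_eq_1)

lemma orthonormal_basis_nonempty: "orthonormal_basis (E :: (real^'d) set) \<Longrightarrow> E \<noteq> {}"
  unfolding orthonormal_basis_def by (metis span_empty singleton_iff UNIV_I vec_eq_iff zero_index zero_neq_one)

lemma orthonormal_basis_coord:
  assumes "orthonormal_basis E" "f \<in> E"
  shows "f \<bullet> (\<Sum>e\<in>E. c e *\<^sub>R e) = c f"
proof -
  have "f \<bullet> (\<Sum>e\<in>E. c e *\<^sub>R e) = (\<Sum>e\<in>E. if e = f then c f else 0)"
    unfolding inner_sum_right inner_scaleR_right
    using orthonormal_basis_inner[OF assms(1) assms(2)] by (intro sum.cong) auto
  then show ?thesis using orthonormal_basis_finite[OF assms(1)] assms(2) by simp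
qed

lemma orthonormal_basis_expansion:
  assumes "orthonormal_basis E"
  shows "x = (\<Sum>e\<in>E. (e \<bullet> x) *\<^sub>R e)"
proof -
  define y where "y = x - (\<Sum>e\<in>E. (e \<bullet> x) *\<^sub>R e)"
  have "orthogonal y f" if "f \<in> E" for f
  proof -
    have "f \<bullet> y = 0" by (simp add: y_def inner_diff_right orthonormal_basis_coord[OF assms that])
    then show ?thesis by (simp add: orthogonal_def inner_commute)
  qed
  moreover have "y \<in> span E" using assms unfolding orthonormal_basis_def by blast
  ultimately have "orthogonal y y" by (rule orthogonal_to_span[rotated])
  then show ?thesis by (simp add: y_def orthogonal_def)
qed

lemma orthonormal_basis_parseval:
  assumes "orthonormal_basis E"
  shows "x \<bullet> y = (\<Sum>e\<in>E. (e \<bullet> x) * (e \<bullet> y))"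
  by (subst orthonormal_basis_expansion[OF assms, of x]) (simp add: inner_sum_left)

lemma orthonormal_basis_sum_sq:
  "orthonormal_basis E \<Longrightarrow> (\<Sum>e\<in>E. (e \<bullet> x)\<^sup>2) = (norm x)\<^sup>2"
  unfolding power2_norm_eq_inner by (simp add: orthonormal_basis_parseval[of E x x] power2_eq_square)

lemma matrix_eq_on_orthonormal_basis:
  assumes "orthonormal_basis E" "\<And>e. e \<in> E \<Longrightarrow> A *v e = B *v e"
  shows "A = B"
proof -
  have mult_expansion: "M *v x = (\<Sum>e\<in>E. (e \<bullet> x) *\<^sub>R (M *v e))" for M :: "real^_^_" and x
    by (subst orthonormal_basis_expansion[OF assms(1), of x])
       (simp add: linear_sum[OF matrix_vector_mul_linear] linear_scale[OF matrix_vector_mul_linear])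
  have "A *v x = B *v x" for x
    by (simp only: mult_expansion[of A x] mult_expansion[of B x] assms(2) cong: sum.cong)
  then show ?thesis by (simp add: matrix_eq)
qed

lemma orthonormal_basis_image:
  fixes g :: "real^'d \<Rightarrow> real^'d"
  assumes E: "orthonormal_basis E"
    and g: "\<And>v w. v \<in> E \<Longrightarrow> w \<in> E \<Longrightarrow> g v \<bullet> g w = (if v = w then 1 else 0)"
  shows "orthonormal_basis (g ` E)" "inj_on g E"
proof -
  show inj: "inj_on g E"
  proof (rule inj_onI)
    fix v w assume "v \<in> E" "w \<in> E" "g v = g w"
    then show "v = w" using g[of v v] g[of v w] by (auto split: if_splits)
  qed
  have orth: "pairwise orthogonal (g ` E)"
    unfolding pairwise_def orthogonal_def using g by auto
  have unit: "\<forall>e\<in>g ` E. norm e = 1" using g by (auto simp: norm_eq_1)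
  have "independent E" "independent (g ` E)"
    using E orth unit unfolding orthonormal_basis_def
    by (metis norm_zero zero_neq_one pairwise_orthogonal_independent)+
  then have "dim (UNIV :: (real^'d) set) = card (g ` E)"
    using E dim_eq_card_independent[of E] dim_span[of E] card_image[OF inj]
    unfolding orthonormal_basis_def by simp
  then have "UNIV \<subseteq> span (g ` E)"
    using card_ge_dim_independent[of "g ` E" UNIV] \<open>independent (g ` E)\<close> by simp
  then show "orthonormal_basis (g ` E)" using orth unit unfolding orthonormal_basis_def by auto
qed

section \<open>Symmetric matrices and the spectral theorem\<close>

lemma sym_mat_iff: "sym_mat M \<longleftrightarrow> (\<forall>i j. M$i$j = M$j$i)"
  by (auto simp: sym_mat_def transpose_def vec_eq_iff)

lemma inner_mult_vec_transpose:
  fixes A :: "real^'n^'m"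
  shows "(A *v x) \<bullet> y = x \<bullet> (transpose A *v y)"
  using dot_lmul_matrix[of x "transpose A" y] by (simp add: vector_transpose_matrix)

lemma sym_mat_inner: "sym_mat M \<Longrightarrow> (M *v x) \<bullet> y = x \<bullet> (M *v y)"
  by (simp add: inner_mult_vec_transpose sym_mat_def)

lemma sym_mat_congruence: "sym_mat R \<Longrightarrow> sym_mat M \<Longrightarrow> sym_mat (R ** M ** R)"
  unfolding sym_mat_def by (simp add: matrix_transpose_mul matrix_mul_assoc)

lemma pos_def_imp_sym_mat: "pos_def M \<Longrightarrow> sym_mat M"
  unfolding pos_def_def by blast

lemma linear_plus_quadratic_nonpos_imp_zero:
  fixes a b :: real
  assumes "\<And>t. 2*t*a + t\<^sup>2*b \<le> 0"
  shows "a = 0"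
proof (rule ccontr)
  assume "a \<noteq> 0"
  define k where "k = \<bar>b\<bar> + 1"
  have k: "k > 0" unfolding k_def by simp
  \<comment> \<open>at \<open>t = a/k\<close> the linear term dominates\<close>
  have "k\<^sup>2 * (2*(a/k)*a + (a/k)\<^sup>2*b) \<le> 0"
    using assms[of "a/k"] k by (simp add: mult_nonneg_nonpos)
  also have "k\<^sup>2 * (2*(a/k)*a + (a/k)\<^sup>2*b) = a\<^sup>2 * (2*k + b)"
    using k by (simp add: field_simps power2_eq_square)
  finally show False
    using \<open>a \<noteq> 0\<close> unfolding k_def by (simp add: mult_le_0_iff abs_if split: if_splits)
qed

lemma rayleigh_max_exists:
  fixes M :: "real^'d^'d"
  assumes "subspace S" "S \<noteq> {0}"
  obtains v where "v \<in> S" "norm v = 1" "\<And>y. y \<in> S \<Longrightarrow> y \<bullet> (M *v y) \<le> (v \<bullet> (M *v v)) * (y \<bullet> y)"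
proof -
  define K where "K = S \<inter> sphere 0 1"
  have unit: "y /\<^sub>R norm y \<in> K" if "y \<in> S" "y \<noteq> 0" for y
    unfolding K_def using that assms(1) by (simp add: subspace_scale)
  have "compact K" unfolding K_def
    by (intro closed_Int_compact closed_subspace assms(1) compact_sphere)
  moreover have "K \<noteq> {}" using assms unfolding subspace_def by (auto dest: unit)
  moreover have "continuous_on K (\<lambda>x. x \<bullet> (M *v x))"
    by (intro continuous_intros linear_continuous_on matrix_vector_mul_linear_gen
        bounded_linear_inner_right) (simp add: linear_linear)
  ultimately obtain v where v: "v \<in> K" and max: "\<And>y. y \<in> K \<Longrightarrow> y \<bullet> (M *v y) \<le> v \<bullet> (M *v v)"
    using continuous_attains_sup by metis
  have "y \<bullet> (M *v y) \<le> (v \<bullet> (M *v v)) * (y \<bullet> y)" if "y \<in> S" for y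
  proof (cases "y = 0")
    case False
    then have "(y \<bullet> (M *v y)) / (norm y)\<^sup>2 \<le> v \<bullet> (M *v v)"
      using max[OF unit[OF that False]]
      by (simp add: matrix_vector_mult_scaleR power2_eq_square divide_inverse mult_ac)
    then show ?thesis using False by (simp add: divide_le_eq power2_norm_eq_inner mult.commute)
  qed simp
  then show ?thesis using that v unfolding K_def by auto
qed

lemma rayleigh_max_eigenvector:
  fixes M :: "real^'d^'d"
  assumes M: "sym_mat M" and S: "subspace S" and inv: "\<And>x. x \<in> S \<Longrightarrow> M *v x \<in> S"
    and v: "v \<in> S" "norm v = 1"
    and max: "\<And>y. y \<in> S \<Longrightarrow> y \<bullet> (M *v y) \<le> (v \<bullet> (M *v v)) * (y \<bullet> y)"
  shows "M *v v = (v \<bullet> (M *v v)) *\<^sub>R v"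
proof -
  define lam where "lam = v \<bullet> (M *v v)"
  have vv: "v \<bullet> v = 1" using v by (simp add: norm_eq_1)
  \<comment> \<open>first-order condition at the maximiser \<open>v\<close>, in the direction \<open>w \<bottom> v\<close>\<close>
  have perp: "v \<bullet> (M *v w) = 0" if "w \<in> S" "v \<bullet> w = 0" for w
  proof (rule linear_plus_quadratic_nonpos_imp_zero)
    fix t :: real
    have sym: "w \<bullet> (M *v v) = v \<bullet> (M *v w)"
      using sym_mat_inner[OF M, of w v] by (simp add: inner_commute)
    have "v + t *\<^sub>R w \<in> S" using S v that(1) by (simp add: subspace_add subspace_scale)
    from max[OF this]
    have "lam + 2*t*(v \<bullet> (M *v w)) + t\<^sup>2*(w \<bullet> (M *v w)) \<le> lam * (1 + t\<^sup>2 * (w \<bullet> w))"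
      using sym that(2) vv
      by (simp add: matrix_vector_right_distrib matrix_vector_mult_scaleR inner_add_left
          inner_add_right lam_def power2_eq_square inner_commute algebra_simps)
    then show "2*t*(v \<bullet> (M *v w)) + t\<^sup>2*(w \<bullet> (M *v w) - lam * (w \<bullet> w)) \<le> 0"
      by (simp add: algebra_simps)
  qed
  define u where "u = M *v v - lam *\<^sub>R v"
  have "u \<in> S" unfolding u_def using S v(1) inv by (simp add: subspace_diff subspace_scale)
  moreover have vu: "v \<bullet> u = 0" unfolding u_def using vv by (simp add: inner_diff_right lam_def)
  ultimately have "(M *v v) \<bullet> u = 0" using perp sym_mat_inner[OF M] by simp
  then have "u \<bullet> u = 0" using vu unfolding u_def by (simp add: inner_diff_left)
  then show ?thesis unfolding u_def lam_def by simp
qed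

lemma span_insert_unit_orthogonal:
  assumes S: "subspace S" and v: "v \<in> S" "v \<bullet> v = 1"
    and E: "span E = S \<inter> {x. v \<bullet> x = 0}"
  shows "span (insert v E) = S"
proof
  show "span (insert v E) \<subseteq> S"
    using S v(1) span_superset[of E] unfolding E by (intro span_minimal) auto
  show "S \<subseteq> span (insert v E)"
  proof
    fix x assume "x \<in> S"
    then have "x - (v \<bullet> x) *\<^sub>R v \<in> span E"
      using S v unfolding E by (simp add: subspace_diff subspace_scale inner_diff_right)
    then have "x - (v \<bullet> x) *\<^sub>R v \<in> span (insert v E)"
      using span_mono[of E "insert v E"] by auto
    moreover have "(v \<bullet> x) *\<^sub>R v \<in> span (insert v E)" by (simp add: span_base span_mul)
    ultimately have "(x - (v \<bullet> x) *\<^sub>R v) + (v \<bullet> x) *\<^sub>R v \<in> span (insert v E)"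
      by (rule span_add)
    then show "x \<in> span (insert v E)" by simp
  qed
qed

text \<open>Induction on the dimension of an \<open>M\<close>-invariant subspace: a maximiser of the
  Rayleigh quotient is an eigenvector, and its orthogonal complement is again invariant.\<close>
lemma spectral_theorem_subspace:
  fixes M :: "real^'d^'d"
  assumes M: "sym_mat M"
  shows "subspace S \<Longrightarrow> (\<And>x. x \<in> S \<Longrightarrow> M *v x \<in> S) \<Longrightarrow>
    \<exists>E c. pairwise orthogonal E \<and> (\<forall>e\<in>E. norm e = 1) \<and> span E = S \<and>
      (\<forall>e\<in>E. M *v e = c e *\<^sub>R e)"
proof (induction "dim S" arbitrary: S rule: less_induct)
  case less
  show ?case
  proof (cases "S = {0}")
    case True
    then show ?thesis by (intro exI[of _ "{}"]) auto
  next
    case False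
    obtain v where v: "v \<in> S" "norm v = 1"
      and max: "\<And>y. y \<in> S \<Longrightarrow> y \<bullet> (M *v y) \<le> (v \<bullet> (M *v v)) * (y \<bullet> y)"
      using rayleigh_max_exists[OF less.prems(1) False] by blast
    define lam where "lam = v \<bullet> (M *v v)"
    have Mv: "M *v v = lam *\<^sub>R v"
      unfolding lam_def by (rule rayleigh_max_eigenvector[OF M less.prems v max])
    have vv: "v \<bullet> v = 1" using v by (simp add: norm_eq_1)
    define S' where "S' = S \<inter> {x. v \<bullet> x = 0}"
    have sub': "subspace S'" unfolding S'_def
      using less.prems(1) subspace_hyperplane[of v] by (auto simp: subspace_def)
    have inv': "M *v x \<in> S'" if "x \<in> S'" for x
      using that less.prems(2) sym_mat_inner[OF M, of v x] Mv unfolding S'_def by auto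
    have "v \<notin> S'" using vv unfolding S'_def by simp
    then have "S' \<subset> S" using v(1) unfolding S'_def by blast
    then have "dim S' < dim S"
      using dim_psubset[of S' S] sub' less.prems(1) by (metis span_eq_iff)
    from less.hyps[OF this sub' inv'] obtain E c where E: "pairwise orthogonal E"
      "\<forall>e\<in>E. norm e = 1" "span E = S'" "\<forall>e\<in>E. M *v e = c e *\<^sub>R e" by blast
    have "E \<subseteq> S'" using E(3) span_superset by blast
    then have "v \<notin> E" using \<open>v \<notin> S'\<close> by blast
    have "pairwise orthogonal (insert v E)"
      using E(1) \<open>E \<subseteq> S'\<close> unfolding S'_def by (auto simp: pairwise_insert orthogonal_def inner_commute)
    moreover have "\<forall>e\<in>insert v E. M *v e = (c(v := lam)) e *\<^sub>R e"
      using Mv E(4) \<open>v \<notin> E\<close> by auto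
    moreover have "span (insert v E) = S"
      using span_insert_unit_orthogonal[OF less.prems(1) v(1) vv] E(3) unfolding S'_def by blast
    ultimately show ?thesis
      using v(2) E(2) by (intro exI[of _ "insert v E"] exI[of _ "c(v := lam)"]) auto
  qed
qed

lemma spectral_theorem:
  fixes M :: "real^'d^'d"
  assumes "sym_mat M"
  obtains E c where "eigenbasis M E c"
  using spectral_theorem_subspace[OF assms, of UNIV]
  unfolding eigenbasis_def orthonormal_basis_def by auto

section \<open>Spectral calculus\<close>

lemma spectral_mat_entry: "spectral_mat E c $ i $ j = (\<Sum>e\<in>E. c e * (e$i * e$j))"
  by (simp add: spectral_mat_def outer_prod_def)

lemma spectral_mat_mult_vec: "spectral_mat E c *v x = (\<Sum>e\<in>E. (c e * (e \<bullet> x)) *\<^sub>R e)"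
  by (simp add: spectral_mat_entry matrix_vector_mult_def inner_vec_def vec_eq_iff
      sum_distrib_left sum_distrib_right algebra_simps sum.swap[of _ E])

lemma spectral_mat_cong:
  "E = F \<Longrightarrow> (\<And>e. e \<in> F \<Longrightarrow> a e = b e) \<Longrightarrow> spectral_mat E a = spectral_mat F b"
  unfolding spectral_mat_def by (auto intro: sum.cong)

lemma sym_mat_spectral_mat: "sym_mat (spectral_mat E c)"
  by (simp add: sym_mat_iff spectral_mat_entry mult.commute)

lemma spectral_mat_eigen:
  assumes "orthonormal_basis E" "f \<in> E"
  shows "spectral_mat E c *v f = c f *\<^sub>R f"
proof -
  have "spectral_mat E c *v f = (\<Sum>e\<in>E. (c e * (f \<bullet> e)) *\<^sub>R e)"
    by (simp add: spectral_mat_mult_vec inner_commute)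
  also have "\<dots> = (\<Sum>e\<in>E. if e = f then c f *\<^sub>R f else 0)"
    using orthonormal_basis_inner[OF assms(1) assms(2)] by (intro sum.cong) auto
  finally show ?thesis using orthonormal_basis_finite[OF assms(1)] assms(2) by simp
qed

lemma eigenbasis_spectral_mat: "orthonormal_basis E \<Longrightarrow> eigenbasis (spectral_mat E c) E c"
  by (simp add: eigenbasis_def spectral_mat_eigen)

lemma eigenbasis_imp_spectral_mat: "eigenbasis M E c \<Longrightarrow> M = spectral_mat E c"
  unfolding eigenbasis_def by (auto intro: matrix_eq_on_orthonormal_basis simp: spectral_mat_eigen)

lemma eigenbasis_imp_sym_mat: "eigenbasis M E c \<Longrightarrow> sym_mat M"
  using eigenbasis_imp_spectral_mat sym_mat_spectral_mat by metis

lemma eigenvalue_eq_inner: "eigenbasis M E c \<Longrightarrow> e \<in> E \<Longrightarrow> c e = e \<bullet> (M *v e)"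
  unfolding eigenbasis_def using orthonormal_basis_inner[of E e e] by auto

lemma eigenvalue_pos: "eigenbasis M E c \<Longrightarrow> pos_def M \<Longrightarrow> e \<in> E \<Longrightarrow> c e > 0"
  using eigenvalue_eq_inner[of M E c e] unfolding pos_def_def eigenbasis_def orthonormal_basis_def
  by (metis norm_zero zero_neq_one)

lemma eigenvalues_agree:
  assumes "eigenbasis M E c" "eigenbasis M F d" "e \<in> E" "g \<in> F" "e \<bullet> g \<noteq> 0"
  shows "c e = d g"
proof -
  have "(M *v e) \<bullet> g = e \<bullet> (M *v g)"
    by (rule sym_mat_inner[OF eigenbasis_imp_sym_mat[OF assms(1)]])
  then have "c e * (e \<bullet> g) = d g * (e \<bullet> g)"
    using assms unfolding eigenbasis_def by auto
  then show ?thesis using assms(5) by simp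
qed

lemma spectral_mat_fun_indep:
  assumes E: "eigenbasis M E c" and F: "eigenbasis M F d"
  shows "spectral_mat E (\<lambda>e. f (c e)) = spectral_mat F (\<lambda>e. f (d e))"
proof (rule matrix_eq_on_orthonormal_basis)
  show F_onb: "orthonormal_basis F" using F eigenbasis_def by blast
  fix g assume g: "g \<in> F"
  have "spectral_mat E (\<lambda>e. f (c e)) *v g = (\<Sum>e\<in>E. (f (d g) * (e \<bullet> g)) *\<^sub>R e)"
    unfolding spectral_mat_mult_vec using eigenvalues_agree[OF E F _ g] by (intro sum.cong) auto
  also have "\<dots> = f (d g) *\<^sub>R (\<Sum>e\<in>E. (e \<bullet> g) *\<^sub>R e)"
    by (simp add: scaleR_sum_right)
  also have "\<dots> = f (d g) *\<^sub>R g"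
    using orthonormal_basis_expansion[of E g] E by (simp add: eigenbasis_def)
  finally show "spectral_mat E (\<lambda>e. f (c e)) *v g = spectral_mat F (\<lambda>e. f (d e)) *v g"
    using spectral_mat_eigen[OF F_onb g] by simp
qed

lemma sum_eigenvalues_indep:
  fixes f :: "real \<Rightarrow> real"
  assumes E: "eigenbasis M E c" and F: "eigenbasis M F d"
  shows "(\<Sum>e\<in>E. f (c e)) = (\<Sum>g\<in>F. f (d g))"
proof -
  have E_onb: "orthonormal_basis E" and F_onb: "orthonormal_basis F"
    using E F eigenbasis_def by blast+
  have unit: "norm e = 1" if "e \<in> E \<union> F" for e
    using that E_onb F_onb unfolding orthonormal_basis_def by blast
  have "(\<Sum>e\<in>E. f (c e)) = (\<Sum>e\<in>E. \<Sum>g\<in>F. (g \<bullet> e)\<^sup>2 * f (c e))"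
    using orthonormal_basis_sum_sq[OF F_onb] unit by (simp add: sum_distrib_right[symmetric])
  also have "\<dots> = (\<Sum>e\<in>E. \<Sum>g\<in>F. (e \<bullet> g)\<^sup>2 * f (d g))"
  proof (intro sum.cong refl)
    fix e g assume "e \<in> E" "g \<in> F"
    then show "(g \<bullet> e)\<^sup>2 * f (c e) = (e \<bullet> g)\<^sup>2 * f (d g)"
      using eigenvalues_agree[OF E F] by (cases "e \<bullet> g = 0") (auto simp: inner_commute)
  qed
  also have "\<dots> = (\<Sum>g\<in>F. f (d g))"
    using orthonormal_basis_sum_sq[OF E_onb] unit
    by (subst sum.swap) (simp add: sum_distrib_right[symmetric])
  finally show ?thesis .
qed

lemma spectral_mat_mult:
  assumes "orthonormal_basis E"
  shows "spectral_mat E a ** spectral_mat E b = spectral_mat E (\<lambda>e. a e * b e)"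
  by (rule matrix_eq_on_orthonormal_basis[OF assms])
    (simp add: matrix_vector_mul_assoc[symmetric] spectral_mat_eigen[OF assms] matrix_vector_mult_scaleR)

lemma mat_1_eq_spectral_mat:
  assumes "orthonormal_basis E"
  shows "mat 1 = spectral_mat E (\<lambda>_. 1)"
  by (rule matrix_eq_on_orthonormal_basis[OF assms]) (simp add: spectral_mat_eigen[OF assms])

lemma mat_pow_spectral_mat:
  "orthonormal_basis E \<Longrightarrow> mat_pow (spectral_mat E a) k = spectral_mat E (\<lambda>e. a e ^ k)"
  by (induction k) (simp_all add: mat_1_eq_spectral_mat spectral_mat_mult)

lemma mat_exp_spectral_mat:
  assumes "orthonormal_basis E"
  shows "mat_exp (spectral_mat E a) = spectral_mat E (\<lambda>e. exp (a e))"
proof -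
  have "(1 / fact k) *\<^sub>R mat_pow (spectral_mat E a) k = (\<Sum>e\<in>E. (a e ^ k /\<^sub>R fact k) *\<^sub>R outer_prod e)" for k
    by (simp only: mat_pow_spectral_mat[OF assms]) (simp add: spectral_mat_def scaleR_sum_right divide_inverse mult.commute)
  moreover have "(\<lambda>k. \<Sum>e\<in>E. (a e ^ k /\<^sub>R fact k) *\<^sub>R outer_prod e) sums (\<Sum>e\<in>E. exp (a e) *\<^sub>R outer_prod e)"
    by (intro sums_sum sums_scaleR_left exp_converges)
  ultimately show ?thesis unfolding mat_exp_def spectral_mat_def by (simp add: sums_iff)
qed

lemma inner_spectral_mat_mult:
  "x \<bullet> (spectral_mat E a *v x) = (\<Sum>e\<in>E. a e * (e \<bullet> x)\<^sup>2)"
  by (simp add: spectral_mat_mult_vec inner_sum_right power2_eq_square inner_commute mult.assoc)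

lemma pos_def_spectral_mat:
  fixes E :: "(real^'d) set"
  assumes E: "orthonormal_basis E" and pos: "\<And>e. e \<in> E \<Longrightarrow> a e > 0"
  shows "pos_def (spectral_mat E a)"
  unfolding pos_def_def
proof (intro conjI allI impI sym_mat_spectral_mat)
  fix x :: "real^'d" assume "x \<noteq> 0"
  then obtain e where e: "e \<in> E" "e \<bullet> x \<noteq> 0"
    using orthonormal_basis_expansion[OF E, of x] by (metis (no_types, lifting) scale_eq_0_iff sum.neutral)
  have "0 < (\<Sum>e\<in>E. a e * (e \<bullet> x)\<^sup>2)"
  proof (rule sum_pos2[of E e])
    show "finite E" by (rule orthonormal_basis_finite[OF E])
    show "0 < a e * (e \<bullet> x)\<^sup>2" using e pos[of e] by simp
    show "0 \<le> a i * (i \<bullet> x)\<^sup>2" if "i \<in> E" for i using pos[OF that] by simp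
  qed fact
  then show "0 < x \<bullet> (spectral_mat E a *v x)" by (simp add: inner_spectral_mat_mult)
qed

lemma mat_log_eq:
  assumes E: "eigenbasis P E p" and pos: "\<And>e. e \<in> E \<Longrightarrow> p e > 0"
  shows "mat_log P = spectral_mat E (\<lambda>e. ln (p e))"
  unfolding mat_log_def
proof (rule the_equality)
  have onb: "orthonormal_basis E" using E eigenbasis_def by blast
  show "sym_mat (spectral_mat E (\<lambda>e. ln (p e))) \<and> mat_exp (spectral_mat E (\<lambda>e. ln (p e))) = P"
    using pos
    by (simp add: sym_mat_spectral_mat mat_exp_spectral_mat[OF onb] eigenbasis_imp_spectral_mat[OF E]
        cong: spectral_mat_cong)
next
  fix L assume L: "sym_mat L \<and> mat_exp L = P"
  then obtain G m where G: "eigenbasis L G m" using spectral_theorem by blast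
  then have onb: "orthonormal_basis G" using eigenbasis_def by blast
  have "P = spectral_mat G (\<lambda>e. exp (m e))"
    using L eigenbasis_imp_spectral_mat[OF G] mat_exp_spectral_mat[OF onb] by simp
  then have "eigenbasis P G (\<lambda>e. exp (m e))" using eigenbasis_spectral_mat[OF onb] by simp
  from spectral_mat_fun_indep[OF E this, of ln] show "L = spectral_mat E (\<lambda>e. ln (p e))"
    using eigenbasis_imp_spectral_mat[OF G] by simp
qed

lemma mat_sqrt_eq:
  assumes E: "eigenbasis P E p" and pos: "\<And>e. e \<in> E \<Longrightarrow> p e > 0"
  shows "mat_sqrt P = spectral_mat E (\<lambda>e. sqrt (p e))"
  unfolding mat_sqrt_def
proof (rule the_equality)
  have onb: "orthonormal_basis E" using E eigenbasis_def by blast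
  have "spectral_mat E (\<lambda>e. sqrt (p e)) ** spectral_mat E (\<lambda>e. sqrt (p e)) = spectral_mat E p"
    using pos by (simp add: spectral_mat_mult[OF onb]) (intro spectral_mat_cong, auto simp: less_imp_le)
  then show "pos_def (spectral_mat E (\<lambda>e. sqrt (p e))) \<and>
      spectral_mat E (\<lambda>e. sqrt (p e)) ** spectral_mat E (\<lambda>e. sqrt (p e)) = P"
    using pos by (simp add: pos_def_spectral_mat[OF onb] eigenbasis_imp_spectral_mat[OF E, symmetric])
next
  fix S assume S: "pos_def S \<and> S ** S = P"
  then obtain G m where G: "eigenbasis S G m" using spectral_theorem pos_def_imp_sym_mat by blast
  then have onb: "orthonormal_basis G" using eigenbasis_def by blast
  have "P = spectral_mat G (\<lambda>e. m e * m e)"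
    using S eigenbasis_imp_spectral_mat[OF G] spectral_mat_mult[OF onb] by simp
  then have "eigenbasis P G (\<lambda>e. m e * m e)" using eigenbasis_spectral_mat[OF onb] by simp
  from spectral_mat_fun_indep[OF E this, of sqrt]
  have "spectral_mat E (\<lambda>e. sqrt (p e)) = spectral_mat G (\<lambda>e. sqrt (m e * m e))" .
  also have "\<dots> = spectral_mat G m"
    using eigenvalue_pos[OF G] S by (intro spectral_mat_cong) (auto simp: less_imp_le)
  finally show "S = spectral_mat E (\<lambda>e. sqrt (p e))" using eigenbasis_imp_spectral_mat[OF G] by simp
qed

lemma matrix_inv_unique:
  fixes A B :: "real^'d^'d"
  assumes "A ** B = mat 1" "B ** A = mat 1"
  shows "matrix_inv A = B"
proof -
  have "matrix_inv A ** A = mat 1"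
    unfolding matrix_inv_def using someI_ex[of "\<lambda>A'. A ** A' = mat 1 \<and> A' ** A = mat 1"] assms by blast
  have "matrix_inv A = matrix_inv A ** (A ** B)" using assms(1) by (simp add: matrix_mul_rid)
  also have "\<dots> = (matrix_inv A ** A) ** B" by (simp add: matrix_mul_assoc)
  also have "\<dots> = B" using \<open>matrix_inv A ** A = mat 1\<close> by (simp add: matrix_mul_lid)
  finally show ?thesis .
qed

lemma norm_spectral_mat:
  assumes E: "orthonormal_basis E"
  shows "(norm (spectral_mat E a))\<^sup>2 = (\<Sum>e\<in>E. (a e)\<^sup>2)"
proof -
  have row: "spectral_mat E a $ i = (\<Sum>e\<in>E. (a e * e$i) *\<^sub>R e)" for i
    by (simp add: vec_eq_iff spectral_mat_entry mult.assoc)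
  have coord: "(\<Sum>e\<in>E. c e *\<^sub>R e) \<bullet> (\<Sum>e\<in>E. c e *\<^sub>R e) = (\<Sum>e\<in>E. (c e)\<^sup>2)" for c
    by (subst orthonormal_basis_parseval[OF E]) (simp add: orthonormal_basis_coord[OF E] power2_eq_square)
  have "(norm (spectral_mat E a))\<^sup>2 = (\<Sum>i\<in>UNIV. spectral_mat E a $ i \<bullet> spectral_mat E a $ i)"
    by (simp add: power2_norm_eq_inner inner_vec_def)
  also have "\<dots> = (\<Sum>i\<in>UNIV. \<Sum>e\<in>E. (a e)\<^sup>2 * (e$i)\<^sup>2)"
    by (simp only: row coord) (simp add: power_mult_distrib)
  also have "\<dots> = (\<Sum>e\<in>E. (a e)\<^sup>2 * (\<Sum>i\<in>UNIV. (e$i)\<^sup>2))"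
    by (subst sum.swap) (simp add: sum_distrib_left)
  also have "\<dots> = (\<Sum>e\<in>E. (a e)\<^sup>2)"
  proof (rule sum.cong[OF refl])
    fix e assume "e \<in> E"
    then have "e \<bullet> e = 1" using orthonormal_basis_inner[OF E] by simp
    then show "(a e)\<^sup>2 * (\<Sum>i\<in>UNIV. (e$i)\<^sup>2) = (a e)\<^sup>2"
      by (simp add: inner_vec_def power2_eq_square)
  qed
  finally show ?thesis .
qed

lemma eigenbasis_left_inverse:
  assumes E: "eigenbasis M E c" and NM: "N ** M = mat 1"
  shows "eigenbasis N E (\<lambda>e. 1 / c e)"
  unfolding eigenbasis_def
proof (intro conjI ballI)
  show "orthonormal_basis E" using E eigenbasis_def by blast
  fix e assume e: "e \<in> E"
  have "e = N *v (M *v e)" using NM by (simp add: matrix_vector_mul_assoc)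
  also have "\<dots> = c e *\<^sub>R (N *v e)" using E e by (simp add: eigenbasis_def matrix_vector_mult_scaleR)
  finally have eq: "e = c e *\<^sub>R (N *v e)" .
  have "e \<noteq> 0" using E e unfolding eigenbasis_def orthonormal_basis_def by auto
  then have "c e \<noteq> 0" using eq by auto
  from arg_cong[OF eq, of "\<lambda>v. (1 / c e) *\<^sub>R v"]
  show "N *v e = (1 / c e) *\<^sub>R e" using \<open>c e \<noteq> 0\<close> by simp
qed

text \<open>\<open>T\<^sup>T T\<close> and \<open>T T\<^sup>T\<close> have the same positive spectrum: \<open>T\<close> maps an eigenvector
  \<open>v\<close> of the former to an eigenvector of the latter of squared length \<open>p v\<close>.\<close>
lemma eigenbasis_transpose_mult_swap:
  fixes T :: "real^'d^'d"
  assumes F: "eigenbasis (transpose T ** T) F p" and pos: "\<And>v. v \<in> F \<Longrightarrow> p v > 0"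
  obtains W q g where "eigenbasis (T ** transpose T) W q" "bij_betw g F W"
    "\<And>v. v \<in> F \<Longrightarrow> q (g v) = p v"
proof -
  have F_onb: "orthonormal_basis F" using F eigenbasis_def by blast
  have TtT: "transpose T *v (T *v v) = p v *\<^sub>R v" if "v \<in> F" for v
    using F that by (simp add: eigenbasis_def matrix_vector_mul_assoc)
  define g where "g v = (1 / sqrt (p v)) *\<^sub>R (T *v v)" for v
  have g_inner: "g v \<bullet> g w = (if v = w then 1 else 0)" if "v \<in> F" "w \<in> F" for v w
  proof -
    have "(T *v v) \<bullet> (T *v w) = p w * (v \<bullet> w)"
      using TtT[OF that(2)] by (simp add: inner_mult_vec_transpose)
    then have "g v \<bullet> g w = p w * (v \<bullet> w) / (sqrt (p v) * sqrt (p w))"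
      by (simp add: g_def)
    then show ?thesis
      using orthonormal_basis_inner[OF F_onb that] pos[OF that(1)] pos[OF that(2)]
      by (auto simp: real_sqrt_mult[symmetric])
  qed
  have g_eigen: "(T ** transpose T) *v g v = p v *\<^sub>R g v" if "v \<in> F" for v
    using TtT[OF that]
    by (simp add: g_def matrix_vector_mul_assoc[symmetric] matrix_vector_mult_scaleR)
  have W: "orthonormal_basis (g ` F)" "inj_on g F"
    using orthonormal_basis_image[OF F_onb g_inner] by auto
  define q where "q w = p (inv_into F g w)" for w
  show ?thesis
  proof
    show "eigenbasis (T ** transpose T) (g ` F) q"
      using W g_eigen by (auto simp: eigenbasis_def q_def inv_into_f_f)
    show "bij_betw g F (g ` F)" using W(2) by (simp add: bij_betw_imageI)
    show "q (g v) = p v" if "v \<in> F" for v using W(2) that by (simp add: q_def inv_into_f_f)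
  qed
qed

section \<open>The Riemannian distance\<close>

lemma invertible_mult_vec_nonzero:
  fixes T :: "real^'d^'d"
  assumes "invertible T" "x \<noteq> 0"
  shows "T *v x \<noteq> 0"
proof
  obtain S where "S ** T = mat 1" using assms(1) unfolding invertible_def by blast
  assume "T *v x = 0"
  then have "(S ** T) *v x = 0" by (simp flip: matrix_vector_mul_assoc)
  then show False using \<open>S ** T = mat 1\<close> assms(2) by simp
qed

lemma pos_def_transpose_mult_self:
  fixes T :: "real^'d^'d"
  assumes "invertible T"
  shows "pos_def (transpose T ** T)"
  unfolding pos_def_def
proof (intro conjI allI impI)
  show "sym_mat (transpose T ** T)" by (simp add: sym_mat_def matrix_transpose_mul)
  fix x :: "real^'d" assume "x \<noteq> 0"
  then have "T *v x \<noteq> 0" by (rule invertible_mult_vec_nonzero[OF assms])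
  moreover have "x \<bullet> ((transpose T ** T) *v x) = (T *v x) \<bullet> (T *v x)"
    by (simp add: matrix_vector_mul_assoc[symmetric] inner_mult_vec_transpose)
  ultimately show "0 < x \<bullet> ((transpose T ** T) *v x)" by simp
qed

lemma pos_def_mat_sqrt:
  fixes X :: "real^'d^'d"
  assumes "pos_def X"
  shows "sym_mat (mat_sqrt X)" "mat_sqrt X ** mat_sqrt X = X"
    "mat_sqrt X ** matrix_inv (mat_sqrt X) = mat 1" "matrix_inv (mat_sqrt X) ** mat_sqrt X = mat 1"
    "sym_mat (matrix_inv (mat_sqrt X))"
proof -
  obtain E x where E: "eigenbasis X E x"
    using spectral_theorem pos_def_imp_sym_mat[OF assms] by blast
  have onb: "orthonormal_basis E" using E eigenbasis_def by blast
  have pos: "\<And>e. e \<in> E \<Longrightarrow> x e > 0" using eigenvalue_pos[OF E assms] by blast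
  have sqrt: "mat_sqrt X = spectral_mat E (\<lambda>e. sqrt (x e))" by (rule mat_sqrt_eq[OF E pos])
  have prod: "spectral_mat E (\<lambda>e. sqrt (x e)) ** spectral_mat E (\<lambda>e. 1 / sqrt (x e)) = mat 1"
    "spectral_mat E (\<lambda>e. 1 / sqrt (x e)) ** spectral_mat E (\<lambda>e. sqrt (x e)) = mat 1"
    unfolding spectral_mat_mult[OF onb] mat_1_eq_spectral_mat[OF onb]
    by (auto intro!: spectral_mat_cong dest!: pos)
  have inv: "matrix_inv (spectral_mat E (\<lambda>e. sqrt (x e))) = spectral_mat E (\<lambda>e. 1 / sqrt (x e))"
    by (rule matrix_inv_unique[OF prod])
  show "sym_mat (mat_sqrt X)" "sym_mat (matrix_inv (mat_sqrt X))"
    unfolding sqrt inv by (rule sym_mat_spectral_mat)+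
  show "mat_sqrt X ** matrix_inv (mat_sqrt X) = mat 1" "matrix_inv (mat_sqrt X) ** mat_sqrt X = mat 1"
    unfolding sqrt inv by (fact prod)+
  have "mat_sqrt X ** mat_sqrt X = spectral_mat E x"
    unfolding sqrt spectral_mat_mult[OF onb] by (auto intro!: spectral_mat_cong dest!: pos)
  then show "mat_sqrt X ** mat_sqrt X = X" using eigenbasis_imp_spectral_mat[OF E] by simp
qed

text \<open>With \<open>Q = X^(1/2)\<close> and \<open>R = A^(-1/2)\<close>, the matrix \<open>T = Q R\<close> satisfies
  \<open>T\<^sup>T T = R X R\<close>, the argument of the logarithm in \<open>\<delta>\<^sub>R(A, X)\<close>, and \<open>T T\<^sup>T = Q A\<^sup>-\<^sup>1 Q\<close>,
  the inverse of \<open>Q\<^sup>-\<^sup>1 A Q\<^sup>-\<^sup>1\<close>.\<close>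
lemma mat_sqrt_factorization:
  fixes A X :: "real^'d^'d"
  assumes A: "pos_def A" and X: "pos_def X"
  defines "T \<equiv> mat_sqrt X ** matrix_inv (mat_sqrt A)"
  shows "transpose T ** T = matrix_inv (mat_sqrt A) ** X ** matrix_inv (mat_sqrt A)"
    and "(matrix_inv (mat_sqrt X) ** A ** matrix_inv (mat_sqrt X)) ** (T ** transpose T) = mat 1"
    and "invertible T"
proof -
  define Q where "Q = mat_sqrt X"
  define Qi where "Qi = matrix_inv Q"
  define S where "S = mat_sqrt A"
  define R where "R = matrix_inv S"
  note Q = pos_def_mat_sqrt[OF X, folded Q_def, folded Qi_def]
  note S = pos_def_mat_sqrt[OF A, folded S_def, folded R_def]
  have T: "T = Q ** R" unfolding T_def Q_def R_def S_def ..
  have cancel: "Z ** Qi ** Q = Z" "Z ** S ** R = Z" for Z :: "real^'d^'d"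
    using Q(4) S(3) by (metis matrix_mul_assoc matrix_mul_rid)+
  have "transpose T ** T = R ** (Q ** Q) ** R"
    using Q(1) S(5) by (simp add: T sym_mat_def matrix_transpose_mul matrix_mul_assoc)
  then show "transpose T ** T = matrix_inv (mat_sqrt A) ** X ** matrix_inv (mat_sqrt A)"
    using Q(2) by (simp add: R_def S_def)
  show "(matrix_inv (mat_sqrt X) ** A ** matrix_inv (mat_sqrt X)) ** (T ** transpose T) = mat 1"
    using Q(1,4) S(5) unfolding Qi_def[symmetric] Q_def[symmetric] S(2)[symmetric]
    by (simp add: T sym_mat_def matrix_transpose_mul matrix_mul_assoc cancel)
  show "invertible T"
    unfolding T using Q(3,4) S(3,4) by (intro invertible_mult) (auto simp: invertible_def)
qed

lemma delta_R_sq_eq_sum_ln_sq: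
  fixes A X :: "real^'d^'d"
  assumes A: "pos_def A" and X: "pos_def X"
    and U: "eigenbasis (matrix_inv (mat_sqrt X) ** A ** matrix_inv (mat_sqrt X)) U c"
  shows "(delta_R A X)\<^sup>2 = (\<Sum>u\<in>U. (ln (c u))\<^sup>2)"
proof -
  define T where "T = mat_sqrt X ** matrix_inv (mat_sqrt A)"
  note T = mat_sqrt_factorization[OF A X, folded T_def]
  have P: "pos_def (transpose T ** T)" by (rule pos_def_transpose_mult_self[OF T(3)])
  then obtain F p where F: "eigenbasis (transpose T ** T) F p"
    using spectral_theorem pos_def_imp_sym_mat by blast
  have p_pos: "\<And>v. v \<in> F \<Longrightarrow> p v > 0" using eigenvalue_pos[OF F P] by blast
  have F_onb: "orthonormal_basis F" using F eigenbasis_def by blast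
  have "(delta_R A X)\<^sup>2 = (norm (mat_log (transpose T ** T)))\<^sup>2"
    by (simp add: delta_R_def T(1))
  also have "\<dots> = (\<Sum>v\<in>F. (ln (p v))\<^sup>2)"
    by (simp add: mat_log_eq[OF F p_pos] norm_spectral_mat[OF F_onb])
  finally have delta: "(delta_R A X)\<^sup>2 = (\<Sum>v\<in>F. (ln (p v))\<^sup>2)" .
  obtain W q g where W: "eigenbasis (T ** transpose T) W q" and g: "bij_betw g F W"
    and q: "\<And>v. v \<in> F \<Longrightarrow> q (g v) = p v"
    using eigenbasis_transpose_mult_swap[OF F p_pos] by blast
  have "(\<Sum>u\<in>U. (ln (c u))\<^sup>2) = (\<Sum>w\<in>W. (ln (1 / q w))\<^sup>2)"
    by (rule sum_eigenvalues_indep[OF U eigenbasis_left_inverse[OF W T(2)]])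
  also have "\<dots> = (\<Sum>v\<in>F. (ln (1 / p v))\<^sup>2)"
    using sum.reindex_bij_betw[OF g, of "\<lambda>w. (ln (1 / q w))\<^sup>2"] q by simp
  also have "\<dots> = (\<Sum>v\<in>F. (ln (p v))\<^sup>2)"
    using p_pos by (intro sum.cong) (auto simp: ln_div)
  finally show ?thesis using delta by simp
qed

section \<open>Convexity\<close>

lemma convex_on_ln_sq: "convex_on {0<..1} (\<lambda>t::real. (ln t)\<^sup>2)"
proof (rule convex_on_realI[where f' = "\<lambda>t. 2 * ln t / t"])
  show "connected {0<..(1::real)}" by simp
  fix x :: real assume "x \<in> {0<..1}"
  then show "((\<lambda>t. (ln t)\<^sup>2) has_real_derivative 2 * ln x / x) (at x)"
    by (auto intro!: derivative_eq_intros simp: field_simps power2_eq_square)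
next
  fix x y :: real assume xy: "x \<in> {0<..1}" "y \<in> {0<..1}" "x \<le> y"
  then have "ln x / x \<le> ln y / x" by (simp add: divide_right_mono)
  also have "\<dots> \<le> ln y / y" using xy by (intro divide_left_mono_neg) auto
  finally show "2 * ln x / x \<le> 2 * ln y / y" by simp
qed

text \<open>Peierls' inequality: each Rayleigh quotient is a convex combination of the
  eigenvalues with weights \<open>(e \<bullet> u)\<^sup>2\<close>, and these weights are doubly stochastic.\<close>
lemma peierls_inequality:
  assumes h: "convex_on I h" and E: "eigenbasis C E c" and spec: "\<And>e. e \<in> E \<Longrightarrow> c e \<in> I"
    and U: "orthonormal_basis U"
  shows "(\<Sum>u\<in>U. h (u \<bullet> (C *v u))) \<le> (\<Sum>e\<in>E. h (c e))"
proof -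
  have E_onb: "orthonormal_basis E" using E eigenbasis_def by blast
  have unit: "norm e = 1" if "e \<in> E \<union> U" for e
    using that E_onb U unfolding orthonormal_basis_def by blast
  have "h (u \<bullet> (C *v u)) \<le> (\<Sum>e\<in>E. (e \<bullet> u)\<^sup>2 * h (c e))" if u: "u \<in> U" for u
  proof -
    have "u \<bullet> (C *v u) = (\<Sum>e\<in>E. (e \<bullet> u)\<^sup>2 *\<^sub>R c e)"
      unfolding eigenbasis_imp_spectral_mat[OF E] inner_spectral_mat_mult by (simp add: mult.commute)
    moreover have "(\<Sum>e\<in>E. (e \<bullet> u)\<^sup>2) = 1"
      using orthonormal_basis_sum_sq[OF E_onb] unit u by simp
    ultimately show ?thesis
      using convex_on_sum[OF orthonormal_basis_finite[OF E_onb] orthonormal_basis_nonempty[OF E_onb] h,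
          of "\<lambda>e. (e \<bullet> u)\<^sup>2" c] spec by simp
  qed
  then have "(\<Sum>u\<in>U. h (u \<bullet> (C *v u))) \<le> (\<Sum>u\<in>U. \<Sum>e\<in>E. (e \<bullet> u)\<^sup>2 * h (c e))"
    by (rule sum_mono)
  also have "\<dots> = (\<Sum>e\<in>E. h (c e) * (\<Sum>u\<in>U. (u \<bullet> e)\<^sup>2))"
    by (subst sum.swap) (simp add: sum_distrib_left inner_commute mult.commute)
  also have "\<dots> = (\<Sum>e\<in>E. h (c e))"
    using orthonormal_basis_sum_sq[OF U] unit by simp
  finally show ?thesis .
qed

lemma inner_convex_comb_mult_vec:
  fixes M N :: "real^'n^'n"
  shows "x \<bullet> ((s *\<^sub>R M + t *\<^sub>R N) *v x) = s * (x \<bullet> (M *v x)) + t * (x \<bullet> (N *v x))"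
  by (simp add: matrix_vector_mult_add_rdistrib inner_add_right flip: scaleR_matrix_vector_assoc)

lemma convex_pos_def_loewner_le:
  fixes X :: "real^'d^'d"
  assumes "sym_mat X"
  shows "convex {M. pos_def M \<and> loewner_le M X}"
  unfolding convex_def
proof (intro ballI allI impI, clarify)
  fix M N :: "real^'d^'d" and s t :: real
  assume M: "pos_def M" "loewner_le M X" and N: "pos_def N" "loewner_le N X"
    and st: "0 \<le> s" "0 \<le> t" "s + t = 1"
  have sym: "sym_mat (s *\<^sub>R M + t *\<^sub>R N)" "sym_mat (X - (s *\<^sub>R M + t *\<^sub>R N))"
    using M N assms by (auto simp: pos_def_def loewner_le_def pos_semidef_def sym_mat_iff)
  have diff: "X - (s *\<^sub>R M + t *\<^sub>R N) = s *\<^sub>R (X - M) + t *\<^sub>R (X - N)"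
    using st by (simp add: algebra_simps flip: scaleR_add_left)
  show "pos_def (s *\<^sub>R M + t *\<^sub>R N) \<and> loewner_le (s *\<^sub>R M + t *\<^sub>R N) X"
    using sym M N st unfolding pos_def_def loewner_le_def pos_semidef_def diff inner_convex_comb_mult_vec
    by (smt (verit) mult_nonneg_nonneg mult_pos_pos)
qed

lemma inner_congruence_mult_vec:
  fixes R :: "real^'d^'d"
  assumes "sym_mat R"
  shows "u \<bullet> ((R ** K ** R) *v u) = (R *v u) \<bullet> (K *v (R *v u))"
  by (simp add: matrix_vector_mul_assoc[symmetric] sym_mat_inner[OF assms])

lemma rayleigh_quotient_congruence:
  fixes X M Qi :: "real^'d^'d"
  assumes M: "pos_def M" "loewner_le M X"
    and Qi: "sym_mat Qi" "invertible Qi" "Qi ** X ** Qi = mat 1"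
    and u: "norm u = 1"
  shows "u \<bullet> ((Qi ** M ** Qi) *v u) \<in> {0<..1}"
proof -
  note quad = inner_congruence_mult_vec[OF Qi(1)]
  have "u \<noteq> 0" using u by auto
  then have "Qi *v u \<noteq> 0" by (rule invertible_mult_vec_nonzero[OF Qi(2)])
  then have "0 < (Qi *v u) \<bullet> (M *v (Qi *v u))" using M(1) unfolding pos_def_def by blast
  moreover have "0 \<le> (Qi *v u) \<bullet> ((X - M) *v (Qi *v u))"
    using M(2) unfolding loewner_le_def pos_semidef_def by blast
  moreover have "(Qi *v u) \<bullet> (X *v (Qi *v u)) = 1"
    using quad[of u X] Qi(3) u by (simp add: norm_eq_1)
  ultimately show ?thesis
    by (simp add: quad matrix_vector_mult_diff_rdistrib inner_diff_right)
qed

lemma sum_fun_eigenvalues_convex: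
  assumes h: "convex_on I h" and t: "0 \<le> t" "t \<le> 1"
    and M: "eigenbasis M E a" and N: "eigenbasis N F b" and G: "eigenbasis G U g"
    and range: "\<And>u. norm u = 1 \<Longrightarrow> u \<bullet> (M *v u) \<in> I \<and> u \<bullet> (N *v u) \<in> I"
    and affine: "\<And>u. u \<bullet> (G *v u) = (1 - t) * (u \<bullet> (M *v u)) + t * (u \<bullet> (N *v u))"
  shows "(\<Sum>u\<in>U. h (g u)) \<le> (1 - t) * (\<Sum>e\<in>E. h (a e)) + t * (\<Sum>e\<in>F. h (b e))"
proof -
  have unit: "norm e = 1" if "e \<in> U \<union> E \<union> F" for e
    using that M N G unfolding eigenbasis_def orthonormal_basis_def by blast
  have U_onb: "orthonormal_basis U" using G eigenbasis_def by blast
  have "(\<Sum>u\<in>U. h (g u)) = (\<Sum>u\<in>U. h (u \<bullet> (G *v u)))"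
    using eigenvalue_eq_inner[OF G] by simp
  also have "\<dots> \<le> (\<Sum>u\<in>U. (1 - t) * h (u \<bullet> (M *v u)) + t * h (u \<bullet> (N *v u)))"
    unfolding affine using convex_onD[OF h] range unit t by (intro sum_mono) simp
  also have "\<dots> = (1 - t) * (\<Sum>u\<in>U. h (u \<bullet> (M *v u))) + t * (\<Sum>u\<in>U. h (u \<bullet> (N *v u)))"
    by (simp add: sum.distrib sum_distrib_left)
  also have "\<dots> \<le> (1 - t) * (\<Sum>e\<in>E. h (a e)) + t * (\<Sum>e\<in>F. h (b e))"
    using peierls_inequality[OF h M _ U_onb] peierls_inequality[OF h N _ U_onb] t
      eigenvalue_eq_inner[OF M] eigenvalue_eq_inner[OF N] range unit
    by (intro add_mono mult_left_mono) auto
  finally show ?thesis .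
qed

lemma matrix_inv_mat_sqrt:
  fixes X :: "real^'d^'d"
  assumes "pos_def X"
  shows "sym_mat (matrix_inv (mat_sqrt X))" "invertible (matrix_inv (mat_sqrt X))"
    "matrix_inv (mat_sqrt X) ** X ** matrix_inv (mat_sqrt X) = mat 1"
proof -
  note Q = pos_def_mat_sqrt[OF assms]
  show "sym_mat (matrix_inv (mat_sqrt X))" "invertible (matrix_inv (mat_sqrt X))"
    using Q(3,4,5) by (auto simp: invertible_def)
  have "matrix_inv (mat_sqrt X) ** X ** matrix_inv (mat_sqrt X) =
      (matrix_inv (mat_sqrt X) ** mat_sqrt X) ** (mat_sqrt X ** matrix_inv (mat_sqrt X))"
    using Q(2) by (metis matrix_mul_assoc)
  then show "matrix_inv (mat_sqrt X) ** X ** matrix_inv (mat_sqrt X) = mat 1"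
    using Q(3,4) by (simp add: matrix_mul_lid)
qed

lemma convex_on_delta_R_sq:
  fixes X :: "real^'d^'d"
  assumes X: "pos_def X"
  shows "convex_on {M. pos_def M \<and> loewner_le M X} (\<lambda>M. (delta_R M X)\<^sup>2)"
proof -
  define D where "D = {M. pos_def M \<and> loewner_le M X}"
  define Qi where "Qi = matrix_inv (mat_sqrt X)"
  define C where "C M = Qi ** M ** Qi" for M
  note Qi = matrix_inv_mat_sqrt[OF X, folded Qi_def]
  have rayleigh: "u \<bullet> (C M *v u) \<in> {0<..1}" if "M \<in> D" "norm u = 1" for M u
    using rayleigh_quotient_congruence[OF _ _ Qi that(2)] that(1) by (simp add: C_def D_def)
  have has_eigenbasis: "\<exists>E c. eigenbasis (C M) E c" if "M \<in> D" for M
    using that Qi(1) spectral_theorem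
    by (metis C_def D_def mem_Collect_eq pos_def_imp_sym_mat sym_mat_congruence)
  have phi: "(delta_R M X)\<^sup>2 = (\<Sum>e\<in>E. (ln (c e))\<^sup>2)" if "M \<in> D" "eigenbasis (C M) E c" for M E c
    using delta_R_sq_eq_sum_ln_sq[OF _ X] that by (simp add: D_def C_def Qi_def)
  have "convex D" unfolding D_def by (rule convex_pos_def_loewner_le[OF pos_def_imp_sym_mat[OF X]])
  have "convex_on D (\<lambda>M. (delta_R M X)\<^sup>2)"
  proof (rule convex_onI[OF _ \<open>convex D\<close>])
    fix t :: real and M N assume t: "0 < t" "t < 1" and MN: "M \<in> D" "N \<in> D"
    define G where "G = (1 - t) *\<^sub>R M + t *\<^sub>R N"
    have "G \<in> D" using \<open>convex D\<close> MN t unfolding G_def convex_alt by simp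
    obtain U g E1 c1 E2 c2 where U: "eigenbasis (C G) U g"
      and E1: "eigenbasis (C M) E1 c1" and E2: "eigenbasis (C N) E2 c2"
      using has_eigenbasis \<open>G \<in> D\<close> MN by meson
    have "(\<Sum>u\<in>U. (ln (g u))\<^sup>2) \<le> (1 - t) * (\<Sum>e\<in>E1. (ln (c1 e))\<^sup>2) + t * (\<Sum>e\<in>E2. (ln (c2 e))\<^sup>2)"
      using rayleigh MN t
      by (intro sum_fun_eigenvalues_convex[OF convex_on_ln_sq _ _ E1 E2 U])
         (auto simp: G_def C_def inner_congruence_mult_vec[OF Qi(1)] inner_convex_comb_mult_vec)
    then show "(delta_R ((1 - t) *\<^sub>R M + t *\<^sub>R N) X)\<^sup>2 \<le> (1 - t) * (delta_R M X)\<^sup>2 + t * (delta_R N X)\<^sup>2"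
      using phi[OF \<open>G \<in> D\<close> U] phi[OF MN(1) E1] phi[OF MN(2) E2] unfolding G_def by simp
  qed
  then show ?thesis unfolding D_def .
qed

lemma convex_on_linear_vimage:
  assumes A: "linear A" and f: "convex_on D f"
  shows "convex_on (A -` D) (\<lambda>x. f (A x))"
proof (rule convex_onI)
  show "convex (A -` D)" by (rule convex_linear_vimage[OF A convex_on_imp_convex[OF f]])
  fix t :: real and x y assume "0 < t" "t < 1" "x \<in> A -` D" "y \<in> A -` D"
  then show "f (A ((1 - t) *\<^sub>R x + t *\<^sub>R y)) \<le> (1 - t) * f (A x) + t * f (A y)"
    using convex_onD[OF f, of t "A x" "A y"] by (simp add: linear_add[OF A] linear_scale[OF A])
qed

theorem theorem1:
  fixes X :: "real^'d^'d" and B :: "'n::finite \<Rightarrow> real^'d^'d"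
  assumes "pos_def X"
    and "\<And>i. pos_def (B i)"
  shows "convex_on
           ({\<alpha> :: real^'n. loewner_le (\<Sum>i\<in>UNIV. \<alpha> $ i *\<^sub>R B i) X \<and> (\<forall>i. \<alpha> $ i \<ge> 0)}
             \<inter> {\<alpha>. pos_def (\<Sum>i\<in>UNIV. \<alpha> $ i *\<^sub>R B i)})
           (\<lambda>\<alpha>. (delta_R (\<Sum>i\<in>UNIV. \<alpha> $ i *\<^sub>R B i) X)\<^sup>2)"
proof -
  define A where "A \<alpha> = (\<Sum>i\<in>UNIV. \<alpha> $ i *\<^sub>R B i)" for \<alpha> :: "real^'n"
  define D where "D = {M. pos_def M \<and> loewner_le M X}"
  have "linear A"
    unfolding A_def by (rule linearI) (simp_all add: scaleR_add_left sum.distrib scaleR_sum_right)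
  then have "convex_on (A -` D) (\<lambda>\<alpha>. (delta_R (A \<alpha>) X)\<^sup>2)"
    unfolding D_def by (rule convex_on_linear_vimage[OF _ convex_on_delta_R_sq[OF assms(1)]])
  moreover have "convex (A -` D \<inter> {\<alpha>. \<forall>i. 0 \<le> \<alpha> $ i})"
    using convex_linear_vimage[OF \<open>linear A\<close> convex_pos_def_loewner_le[OF pos_def_imp_sym_mat[OF assms(1)]]]
    unfolding D_def by (intro convex_Int) (auto simp: convex_def)
  ultimately have "convex_on (A -` D \<inter> {\<alpha>. \<forall>i. 0 \<le> \<alpha> $ i}) (\<lambda>\<alpha>. (delta_R (A \<alpha>) X)\<^sup>2)"
    by (meson convex_on_subset inf_le1)
  moreover have "A -` D \<inter> {\<alpha>. \<forall>i. 0 \<le> \<alpha> $ i} =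
      {\<alpha>. loewner_le (A \<alpha>) X \<and> (\<forall>i. \<alpha> $ i \<ge> 0)} \<inter> {\<alpha>. pos_def (A \<alpha>)}"
    unfolding D_def by auto
  ultimately show ?thesis unfolding A_def by simp
qed

end
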